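(* Let $f:X\to Y$, let $\langle P,I,C\rangle$ be an analytic template over $f$ (for modeling language $\mathcal M$, with predicates $P_X,P_Y,P_f$), and let $f^\uparrow:\mathrm{Var}(X)\to\mathrm{Var}(Y)$ be any function. If the template $\langle P,I,C\rangle$ is valid, then the lifted analytic template induced by $f^\uparrow$ is valid, i.e. for every $\mathbf M\in\mathrm{Var}(\mathcal M)$, every $\phi\in\mathtt{Prop}(F)$, every $\mathbf x\in\mathrm{Var}(X)$ with $\mathsf{Inv}(C,\langle\mathbf x,\mathbf M\rangle,\phi)$, and every $\mathfrak c\in[\![\Phi\wedge\phi]\!]$, we have $I^\uparrow_\phi(\mathbf x)|_{\mathfrak c}\prec\langle\mathbf M|_{\mathfrak c},P\rangle$.
   Context: Product lines: a finite feature set $F$, feature model $\Phi\in\mathtt{Prop}(F)$ (propositional formulas over $F$); configurations $\mathfrak c\subseteq F$, $\mathfrak c\models\phi$ propositional satisfaction, $[\![\phi]\!]=\{\mathfrak c:\mathfrak c\models\phi\}$. For a set $X$, $\mathrm{Var}(X)$ is a set of product lines over $X$ with derivation $\mathbf x|_{\mathfrak c}\in X$ for valid $\mathfrak c$; pairs derive componentwise. $\mathsf{Inv}(Q,\mathbf x,\phi)$ means $\forall\mathfrak c\in[\![\Phi]\!],\ \mathfrak c\models\phi\Rightarrow Q(\mathbf x|_{\mathfrak c})$. Goals: propositional $p$, or predicative $\langle M,Q\rangle$ asserting $Q(M)$; $\{g_1,\dots,g_n\}\prec g$ ($n\ge1$) means $(\bigwedge g_i)\Rightarrow g$. A template over $\mathcal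 M$ with domain $D$ is $\langle P,I,C\rangle$, $P:\mathcal M\to\{\top,\bot\}$, $I:D\to$ finite sets of goals, $C:D\times\mathcal M\to\{\top,\bot\}$; valid iff $\forall x,M,\ C(x,M)\Rightarrow I(x)\prec\langle M,P\rangle$. An analytic template over $f:X\to Y$ is a template over $\mathcal M$ with domain $X$ whose instantiation is $I(x)=\{\langle x,P_X\rangle,\ \langle f(x),P_Y\rangle,\ g_f\}$ where $P_X$ is a predicate on $X$, $P_Y$ a predicate on $Y$, $P_f$ a predicate on $X\times Y$, and $g_f$ is the proposition $\forall x'\in X,\ P_f(x',f(x'))$. Variational goals: $\langle p,\phi\rangle$ or $\langle\mathbf z,Q,\phi\rangle$ with $\mathbf z$ a product line, presence condition $\mathtt{pc}=\phi$; derivation for $\mathfrak c\in[\![\Phi\wedge\phi]\!]$: $\langle p,\phi\rangle|_{\mathfrak c}=p$, $\langle\mathbf z,Q,\phi\rangle|_{\mathfrak c}=\langle\mathbf z|_{\mathfrak c},Q\rangle$; for a finite set $\mathbf G$ of variational goals, $\mathbf G|_{\mathfrak c}=\{\mathbf g|_{\mathfrak c}:\mathbf g\in\mathbf G,\ \mathfrak c\models\mathtt{pc}(\mathbf g)\}$. The lifted analytic template induced by $f^\uparrow$ has, for parent presence condition $\phi$, instantiation $I^\uparrow_\phi(\mathbf x)=\{\langle\mathbf x,P_X,\phi\rangle,\ \langle f^\uparrow(\mathbf x),P_Y,\phi\rangle,\ \langle g_f,\phi\rangle,\ \langle g_{\mathsf{Lift}},\phi\rangle\}$ where $g_{\mathsf{Lift}}$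 is the proposition $\forall\mathbf x'\in\mathrm{Var}(X),\forall\mathfrak c\in[\![\Phi]\!],\ f^\uparrow(\mathbf x')|_{\mathfrak c}=f(\mathbf x'|_{\mathfrak c})$; its parent predicate $P$ and correctness criterion $C$ are those of the original template. *)

theory Defs
  imports Main
begin

(* Propositional formulas over a feature type 'f (F = UNIV :: 'f set, finite). *)
datatype 'f pform = Atom 'f | Tru | Fls | Neg "'f pform"
  | Conj "'f pform" "'f pform" | Disj "'f pform" "'f pform" | Impl "'f pform" "'f pform"

fun sat :: "'f set \<Rightarrow> 'f pform \<Rightarrow> bool" where
  "sat c (Atom a) = (a \<in> c)"
| "sat c Tru = True"
| "sat c Fls = False"
| "sat c (Neg p) = (\<not> sat c p)"
| "sat c (Conj p q) = (sat c p \<and> sat c q)"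
| "sat c (Disj p q) = (sat c p \<or> sat c q)"
| "sat c (Impl p q) = (sat c p \<longrightarrow> sat c q)"

definition sem :: "'f pform \<Rightarrow> 'f set set" where
  "sem \<phi> = {c. sat c \<phi>}"

definition Inv :: "('v \<Rightarrow> 'f set \<Rightarrow> 'x) \<Rightarrow> 'f pform \<Rightarrow> ('x \<Rightarrow> bool) \<Rightarrow> 'v \<Rightarrow> 'f pform \<Rightarrow> bool" where
  "Inv der \<Phi> Q x \<phi> = (\<forall>c \<in> sem \<Phi>. sat c \<phi> \<longrightarrow> Q (der x c))"

(* Goals are represented by the proposition they assert. *)
type_synonym goal = bool

definition prop_goal :: "bool \<Rightarrow> goal" where "prop_goal p = p"
definition pred_goal :: "'m \<Rightarrow> ('m \<Rightarrow> bool) \<Rightarrow> goal" where "pred_goal M Q = Q M"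

definition prec :: "goal set \<Rightarrow> goal \<Rightarrow> bool" where
  "prec G g = ((\<forall>h\<in>G. h) \<longrightarrow> g)"

definition analytic_I :: "('x \<Rightarrow> 'y) \<Rightarrow> ('x \<Rightarrow> bool) \<Rightarrow> ('y \<Rightarrow> bool) \<Rightarrow> ('x \<Rightarrow> 'y \<Rightarrow> bool)
    \<Rightarrow> 'x \<Rightarrow> goal set" where
  "analytic_I f PX PY Pf x =
     {pred_goal x PX, pred_goal (f x) PY, prop_goal (\<forall>x'. Pf x' (f x'))}"

definition template_valid :: "('m \<Rightarrow> bool) \<Rightarrow> ('d \<Rightarrow> goal set) \<Rightarrow> ('d \<Rightarrow> 'm \<Rightarrow> bool) \<Rightarrow> bool" where
  "template_valid P I C = (\<forall>x M. C x M \<longrightarrow> prec (I x) (pred_goal M P))"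

(* Variational goals: a derivation to goals (defined on valid configurations) plus a presence condition *)
type_synonym 'f vgoal = "('f set \<Rightarrow> goal) \<times> 'f pform"

definition vprop :: "bool \<Rightarrow> 'f pform \<Rightarrow> 'f vgoal" where
  "vprop p \<phi> = ((\<lambda>c. prop_goal p), \<phi>)"

definition vpred :: "('v \<Rightarrow> 'f set \<Rightarrow> 'z) \<Rightarrow> 'v \<Rightarrow> ('z \<Rightarrow> bool) \<Rightarrow> 'f pform \<Rightarrow> 'f vgoal" where
  "vpred der z Q \<phi> = ((\<lambda>c. pred_goal (der z c) Q), \<phi>)"

definition pc :: "'f vgoal \<Rightarrow> 'f pform" where "pc g = snd g"

definition derive_goals :: "'f vgoal set \<Rightarrow> 'f set \<Rightarrow> goal set" where
  "derive_goals G c = {fst g c | g. g \<in> G \<and> sat c (pc g)}"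

definition lifted_I :: "'f pform \<Rightarrow> ('x \<Rightarrow> 'y) \<Rightarrow> ('vx \<Rightarrow> 'vy)
    \<Rightarrow> ('vx \<Rightarrow> 'f set \<Rightarrow> 'x) \<Rightarrow> ('vy \<Rightarrow> 'f set \<Rightarrow> 'y)
    \<Rightarrow> ('x \<Rightarrow> bool) \<Rightarrow> ('y \<Rightarrow> bool) \<Rightarrow> ('x \<Rightarrow> 'y \<Rightarrow> bool)
    \<Rightarrow> 'f pform \<Rightarrow> 'vx \<Rightarrow> 'f vgoal set" where
  "lifted_I \<Phi> f fup derX derY PX PY Pf \<phi> x =
     {vpred derX x PX \<phi>, vpred derY (fup x) PY \<phi>,
      vprop (\<forall>x'. Pf x' (f x')) \<phi>,
      vprop (\<forall>x'. \<forall>c \<in> sem \<Phi>. derY (fup x') c = f (derX x' c)) \<phi>}"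

end

theory Submission
  imports Defs
begin

(* Fix a configuration c of the feature model satisfying the presence condition. The invariant
   yields C (x|c) (M|c), so validity of the template applies at x|c; it remains to see that the
   derived lifted goals entail the original instantiation at x|c. They coincide except for the goal
   on f\<up>(x), which the lift-correctness goal g_Lift turns into the goal on f (x|c). *)

lemma sem_Conj_iff: "c \<in> sem (Conj p q) \<longleftrightarrow> c \<in> sem p \<and> sat c q"
  by (simp add: sem_def)

lemma InvD: "Inv der \<Phi> Q x \<phi> \<Longrightarrow> c \<in> sem \<Phi> \<Longrightarrow> sat c \<phi> \<Longrightarrow> Q (der x c)"
  by (simp add: Inv_def)

lemma prec_strengthen_premises:
  assumes "prec G g" and "(\<forall>h\<in>H. h) \<Longrightarrow> (\<forall>h\<in>G. h)"
  shows "prec H g"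
  using assms unfolding prec_def by blast

lemma derive_goals_holdsD:
  assumes "\<forall>h\<in>derive_goals G c. h" and "g \<in> G" and "sat c (pc g)"
  shows "fst g c"
  using assms unfolding derive_goals_def by blast

lemma lifted_I_derived_entails_analytic_I:
  assumes "c \<in> sem \<Phi>" and "sat c \<phi>"
    and derived: "\<forall>h\<in>derive_goals (lifted_I \<Phi> f fup derX derY PX PY Pf \<phi> x) c. h"
  shows "\<forall>h\<in>analytic_I f PX PY Pf (derX x c). h"
proof -
  have lifted_goal: "fst g c" if "g \<in> lifted_I \<Phi> f fup derX derY PX PY Pf \<phi> x" for g
  proof (rule derive_goals_holdsD[OF derived that])
    show "sat c (pc g)"
      using that assms(2) by (auto simp: lifted_I_def vpred_def vprop_def pc_def)
  qed
  have PX: "PX (derX x c)"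
    using lifted_goal[of "vpred derX x PX \<phi>"]
    by (simp add: lifted_I_def vpred_def pred_goal_def)
  have PY_up: "PY (derY (fup x) c)"
    using lifted_goal[of "vpred derY (fup x) PY \<phi>"]
    by (simp add: lifted_I_def vpred_def pred_goal_def)
  have Pf: "\<forall>x'. Pf x' (f x')"
    using lifted_goal[of "vprop (\<forall>x'. Pf x' (f x')) \<phi>"]
    by (simp add: lifted_I_def vprop_def prop_goal_def)
  have lift: "\<forall>x'. \<forall>c \<in> sem \<Phi>. derY (fup x') c = f (derX x' c)"
    using lifted_goal[of "vprop (\<forall>x'. \<forall>c \<in> sem \<Phi>. derY (fup x') c = f (derX x' c)) \<phi>"]
    by (simp add: lifted_I_def vprop_def prop_goal_def)
  have "PY (f (derX x c))"
    using PY_up lift assms(1) by metis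
  with PX Pf show ?thesis
    by (simp add: analytic_I_def pred_goal_def prop_goal_def)
qed

theorem theorem4p3:
  fixes \<Phi> :: "('f::finite) pform"
    and f :: "'x \<Rightarrow> 'y" and fup :: "'vx \<Rightarrow> 'vy"
    and derX :: "'vx \<Rightarrow> 'f set \<Rightarrow> 'x" and derY :: "'vy \<Rightarrow> 'f set \<Rightarrow> 'y"
    and derM :: "'vm \<Rightarrow> 'f set \<Rightarrow> 'm"
    and P :: "'m \<Rightarrow> bool" and C :: "'x \<Rightarrow> 'm \<Rightarrow> bool"
    and PX :: "'x \<Rightarrow> bool" and PY :: "'y \<Rightarrow> bool" and Pf :: "'x \<Rightarrow> 'y \<Rightarrow> bool"
  assumes "template_valid P (analytic_I f PX PY Pf) C"
  shows "\<forall>M :: 'vm. \<forall>\<phi> :: 'f pform. \<forall>x :: 'vx.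
           Inv (\<lambda>(x, M) c. (derX x c, derM M c)) \<Phi> (\<lambda>(a, b). C a b) (x, M) \<phi> \<longrightarrow>
           (\<forall>c \<in> sem (Conj \<Phi> \<phi>).
              prec (derive_goals (lifted_I \<Phi> f fup derX derY PX PY Pf \<phi> x) c)
                   (pred_goal (derM M c) P))"
proof (intro allI impI ballI)
  fix M :: 'vm and \<phi> :: "'f pform" and x :: 'vx and c
  assume inv: "Inv (\<lambda>(x, M) c. (derX x c, derM M c)) \<Phi> (\<lambda>(a, b). C a b) (x, M) \<phi>"
    and "c \<in> sem (Conj \<Phi> \<phi>)"
  then have c: "c \<in> sem \<Phi>" "sat c \<phi>"
    by (simp_all add: sem_Conj_iff)
  have "C (derX x c) (derM M c)"
    using InvD[OF inv c] by simp
  with assms have "prec (analytic_I f PX PY Pf (derX x c)) (pred_goal (derM M c) P)"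
    by (simp add: template_valid_def)
  then show "prec (derive_goals (lifted_I \<Phi> f fup derX derY PX PY Pf \<phi> x) c)
               (pred_goal (derM M c) P)"
    by (rule prec_strengthen_premises) (rule lifted_I_derived_entails_analytic_I[OF c])
qed

end
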